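(* For every $t=0,1,\dots,T-1$, $S^*_t\le S^U_t$.
   Context: Model. Fix an integer horizon $T\ge 2$, a discount factor $\alpha\in(0,1]$, and for $t=0,\dots,T-1$: unit ordering costs $c_t\in\mathbb R$, a salvage coefficient $c_T\in\mathbb R$, setup costs $K_t\ge 0$, functions $G_t:\mathbb R\to\mathbb R$, and independent nonnegative random demands $D_0,\dots,D_{T-1}$ with right-continuous distribution functions $F_t$ and finite means; all expectations appearing are assumed finite. Let $\delta(z)=1$ for $z>0$, $\delta(0)=0$. Put $C_t(y)=(c_t-\alpha c_{t+1})y+G_t(y)+\alpha c_{t+1}E[D_t]$. Standing assumptions: (i) each $C_t$ is convex with $C_t(y)\to+\infty$ as $|y|\to\infty$; (ii) $K_t\ge \alpha K_{t+1}$ for $t=0,\dots,T-2$. Let $V^*_T\equiv 0$, and for $t=T-1,\dots,0$: $H^*_t(y)=C_t(y)+\alpha E[V^*_{t+1}(y-D_t)]$, $V^*_t(x)=\min_{y\ge x}\{K_t\delta(y-x)+H^*_t(y)\}$, and $S^*_t=\min\{x: H^*_t(x)=\min_{y\in\mathbb R}H^*_t(y)\}$. Fix $\theta>0$, $z_m=m\theta$, $Z_\theta=\{z_m:m\in\mathbb Z\}$. Let $C^m_t=\min\{y: C_t(y)=\min_x C_t(x)\}$; with $n_0$ the integer such that $z_{n_0}<C^m_t\le z_{n_0+1}$, let $S^U_t=\min\{z_m\in Z_\theta: z_m\ge C^m_t,\ C_t(z_m)>C_t(z_{n_0})+K_t\}$. *)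

theory Defs
  imports "HOL-Probability.Probability"
begin

definition dlt :: "real \<Rightarrow> real" where
  "dlt z = (if z > 0 then 1 else 0)"

definition Cfun :: "real \<Rightarrow> (nat \<Rightarrow> real) \<Rightarrow> (nat \<Rightarrow> real \<Rightarrow> real)
    \<Rightarrow> 'a measure \<Rightarrow> (nat \<Rightarrow> 'a \<Rightarrow> real) \<Rightarrow> nat \<Rightarrow> real \<Rightarrow> real" where
  "Cfun \<alpha> c G M D t y =
     (c t - \<alpha> * c (Suc t)) * y + G t y + \<alpha> * c (Suc t) * (\<integral>\<omega>. D t \<omega> \<partial>M)"

text \<open>Value function by backward recursion; Vr ... T n is V*_{T-n}.
  V*_t(x) = min_{y >= x} { K_t delta(y-x) + H*_t(y) } (rendered as an infimum).\<close>
primrec Vr :: "real \<Rightarrow> (nat \<Rightarrow> real) \<Rightarrow> (nat \<Rightarrow> real) \<Rightarrow> (nat \<Rightarrow> real \<Rightarrow> real)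
    \<Rightarrow> 'a measure \<Rightarrow> (nat \<Rightarrow> 'a \<Rightarrow> real) \<Rightarrow> nat \<Rightarrow> nat \<Rightarrow> real \<Rightarrow> real" where
  "Vr \<alpha> c K G M D T 0 = (\<lambda>x. 0)"
| "Vr \<alpha> c K G M D T (Suc n) = (\<lambda>x.
     Inf ((\<lambda>y. K (T - Suc n) * dlt (y - x) + Cfun \<alpha> c G M D (T - Suc n) y
             + \<alpha> * (\<integral>\<omega>. Vr \<alpha> c K G M D T n (y - D (T - Suc n) \<omega>) \<partial>M)) ` {x..}))"

definition Vstar where
  "Vstar \<alpha> c K G M D T t = Vr \<alpha> c K G M D T (T - t)"

definition Hstar where
  "Hstar \<alpha> c K G M D T t y =
     Cfun \<alpha> c G M D t y + \<alpha> * (\<integral>\<omega>. Vstar \<alpha> c K G M D T (Suc t) (y - D t \<omega>) \<partial>M)"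

definition Sstar where
  "Sstar \<alpha> c K G M D T t =
     (LEAST x. Hstar \<alpha> c K G M D T t x = Inf (range (Hstar \<alpha> c K G M D T t)))"

definition Cmin where
  "Cmin \<alpha> c G M D t = (LEAST y. Cfun \<alpha> c G M D t y = Inf (range (Cfun \<alpha> c G M D t)))"

definition n0 where
  "n0 \<theta> \<alpha> c G M D t =
     (THE n::int. real_of_int n * \<theta> < Cmin \<alpha> c G M D t \<and> Cmin \<alpha> c G M D t \<le> real_of_int (n + 1) * \<theta>)"

definition SU where
  "SU \<theta> \<alpha> c K G M D t =
     (LEAST z. (\<exists>m::int. z = real_of_int m * \<theta>) \<and> z \<ge> Cmin \<alpha> c G M D t \<and>
        Cfun \<alpha> c G M D t z > Cfun \<alpha> c G M D t (real_of_int (n0 \<theta> \<alpha> c G M D t) * \<theta>) + K t)"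

end

theory Submission
  imports Defs
begin

text \<open>
  For x \<le> x' one has V*_{t+1}(x) \<le> K_{t+1} + V*_{t+1}(x'): from x one may order up to any level
  reachable from x' at the price of at most one more setup. Taking expectations, for z \<le> s,
  H*_t(z) - H*_t(s) \<le> C_t(z) - C_t(s) + \<alpha> K_{t+1} \<le> C_t(z) - C_t(s) + K_t.
  If S^U_t < S*_t, then C_t is nondecreasing on [C^m_t, \<infinity>) by convexity, so
  C_t(S*_t) \<ge> C_t(S^U_t) > C_t(z_{n0}) + K_t, and the inequality for z = z_{n0} < S*_t = s gives
  H*_t(z_{n0}) < H*_t(S*_t), contradicting the minimality of S*_t.
  What remains is to know that S*_t is a minimizer at all: by backward induction every V*_t is
  continuous and bounded below, hence every H*_t is continuous and coercive.
\<close>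

lemma continuous_coercive_has_minimizer:
  fixes f :: "real \<Rightarrow> real"
  assumes cont: "continuous_on UNIV f"
    and top: "filterlim f at_top at_top" and bot: "filterlim f at_top at_bot"
  obtains x where "\<And>y. f x \<le> f y"
proof -
  have "eventually (\<lambda>y. f 0 \<le> f y) at_top" "eventually (\<lambda>y. f 0 \<le> f y) at_bot"
    using top bot by (simp_all add: filterlim_at_top)
  then obtain R1 R2 where R1: "\<And>y. R1 \<le> y \<Longrightarrow> f 0 \<le> f y"
    and R2: "\<And>y. y \<le> R2 \<Longrightarrow> f 0 \<le> f y"
    by (auto simp: eventually_at_top_linorder eventually_at_bot_linorder)
  define I where "I = {min R2 0..max R1 0}"
  have "\<exists>x\<in>I. \<forall>y\<in>I. f x \<le> f y"
    by (rule continuous_attains_inf) (auto simp: I_def intro: continuous_on_subset[OF cont])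
  then obtain x where x: "\<And>y. y \<in> I \<Longrightarrow> f x \<le> f y" by blast
  have "f x \<le> f 0" by (rule x) (simp add: I_def)
  have "f x \<le> f y" for y
  proof (cases "y \<in> I")
    case False
    then have "R1 \<le> y \<or> y \<le> R2" by (auto simp: I_def)
    then show ?thesis using R1[of y] R2[of y] \<open>f x \<le> f 0\<close> by linarith
  qed (rule x)
  then show thesis by (rule that)
qed

lemma continuous_coercive_Least_minimizer:
  fixes f :: "real \<Rightarrow> real"
  assumes cont: "continuous_on UNIV f"
    and top: "filterlim f at_top at_top" and bot: "filterlim f at_top at_bot"
  shows "f (LEAST x. f x = Inf (range f)) \<le> f y"
proof -
  obtain x where x: "\<And>y. f x \<le> f y"
    using continuous_coercive_has_minimizer[OF assms] by blast
  have Inf_eq: "Inf (range f) = f x"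
    by (rule cInf_eq_minimum) (use x in auto)
  have "eventually (\<lambda>y. f x + 1 \<le> f y) at_bot" using bot by (simp add: filterlim_at_top)
  then obtain R where R: "\<And>y. y \<le> R \<Longrightarrow> f x + 1 \<le> f y"
    by (auto simp: eventually_at_bot_linorder)
  define S where "S = {y. f y = f x}"
  have "bdd_below S"
  proof (rule bdd_belowI)
    fix y assume "y \<in> S"
    then have "f y = f x" by (simp add: S_def)
    then show "R \<le> y" using R[of y] by linarith
  qed
  have "Inf S \<in> S"
  proof (rule closed_contains_Inf)
    show "closed S" unfolding S_def by (intro closed_Collect_eq cont continuous_on_const)
    show "S \<noteq> {}" by (auto simp: S_def)
  qed fact
  then have min: "f (Inf S) = f x" by (simp add: S_def)
  have least: "Inf S \<le> y" if "f y = f x" for y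
    by (rule cInf_lower) (use \<open>bdd_below S\<close> that in \<open>simp_all add: S_def\<close>)
  show ?thesis
    unfolding Inf_eq
  proof (rule LeastI2_order[of _ "Inf S"])
    fix z assume "f z = f x"
    then show "f z \<le> f y" using x[of y] by simp
  qed (use min least in auto)
qed

definition tail_Inf :: "(real \<Rightarrow> real) \<Rightarrow> real \<Rightarrow> real" where
  "tail_Inf f x = Inf (f ` {x..})"

lemma tail_Inf_le:
  assumes "\<And>y. b \<le> f y" and "x \<le> y"
  shows "tail_Inf f x \<le> f y"
  unfolding tail_Inf_def
  by (rule cInf_lower) (use assms in \<open>auto intro!: bdd_belowI2[where m = b]\<close>)

lemma tail_Inf_greatest:
  assumes "\<And>y. x \<le> y \<Longrightarrow> L \<le> f y"
  shows "L \<le> tail_Inf f x"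
  unfolding tail_Inf_def by (rule cInf_greatest) (use assms in auto)

lemma tail_Inf_mono:
  assumes "\<And>y. b \<le> f y" and "x \<le> x'"
  shows "tail_Inf f x \<le> tail_Inf f x'"
  by (intro tail_Inf_greatest tail_Inf_le) (use assms in auto)

lemma tail_Inf_gap:
  assumes lb: "\<And>y. b \<le> f y" and "a \<le> c"
    and near: "\<And>y. a \<le> y \<Longrightarrow> y \<le> c \<Longrightarrow> f c - e \<le> f y"
  shows "tail_Inf f c - e \<le> tail_Inf f a"
proof (rule tail_Inf_greatest)
  fix y assume "a \<le> y"
  have "tail_Inf f c \<le> f c" "0 \<le> e"
    using tail_Inf_le[of b f c c] lb near[of c] \<open>a \<le> c\<close> by auto
  then show "tail_Inf f c - e \<le> f y"
    using near[OF \<open>a \<le> y\<close>] tail_Inf_le[of b f c y] lb by (cases "y \<le> c") auto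
qed

lemma continuous_on_tail_Inf:
  assumes cont: "continuous_on UNIV f" and lb: "\<And>y. b \<le> f y"
  shows "continuous_on UNIV (tail_Inf f)"
  unfolding continuous_on_iff
proof (intro ballI allI impI)
  fix x e :: real assume "e > 0"
  then have "e/3 > 0" by simp
  then obtain d where "d > 0" and d: "\<And>y. dist y x < d \<Longrightarrow> dist (f y) (f x) < e/3"
    using cont unfolding continuous_on_iff by blast
  have close: "f x - e/3 < f y" "f y < f x + e/3" if "\<bar>y - x\<bar> < d" for y
  proof -
    have "dist (f y) (f x) < e/3" using d[of y] that by (simp add: dist_real_def)
    then show "f x - e/3 < f y" "f y < f x + e/3" unfolding dist_real_def abs_diff_less_iff by auto
  qed
  have "\<bar>tail_Inf f x' - tail_Inf f x\<bar> < e" if x': "\<bar>x' - x\<bar> < d" for x'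
  proof (cases "x' \<le> x")
    case True
    have "tail_Inf f x - e/3 \<le> tail_Inf f x'"
    proof (rule tail_Inf_gap[OF lb True])
      fix y assume "x' \<le> y" "y \<le> x"
      then have "\<bar>y - x\<bar> < d" using x' by auto
      then show "f x - e/3 \<le> f y" using close(1)[of y] by linarith
    qed
    moreover have "tail_Inf f x' \<le> tail_Inf f x" using tail_Inf_mono[of b f x' x] lb True by blast
    ultimately show ?thesis using \<open>e > 0\<close> by (simp add: abs_less_iff)
  next
    case False
    have "tail_Inf f x' - 2*e/3 \<le> tail_Inf f x"
    proof (rule tail_Inf_gap[OF lb])
      fix y assume "x \<le> y" "y \<le> x'"
      then have "\<bar>y - x\<bar> < d" using x' by auto
      then show "f x' - 2*e/3 \<le> f y" using close(1)[of y] close(2)[OF x'] by linarith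
    qed (use False in simp)
    moreover have "tail_Inf f x \<le> tail_Inf f x'" using tail_Inf_mono[of b f x x'] lb False by simp
    ultimately show ?thesis using \<open>e > 0\<close> by (simp add: abs_less_iff)
  qed
  then show "\<exists>d>0. \<forall>x'\<in>UNIV. dist x' x < d \<longrightarrow> dist (tail_Inf f x') (tail_Inf f x) < e"
    using \<open>d > 0\<close> by (auto simp: dist_real_def)
qed

definition setup_Inf :: "real \<Rightarrow> (real \<Rightarrow> real) \<Rightarrow> real \<Rightarrow> real" where
  "setup_Inf k f x = Inf ((\<lambda>y. k * dlt (y - x) + f y) ` {x..})"

definition mono_up_to :: "real \<Rightarrow> (real \<Rightarrow> real) \<Rightarrow> bool" where
  "mono_up_to k f \<longleftrightarrow> (\<forall>x x'. x \<le> x' \<longrightarrow> f x \<le> k + f x')"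

lemma setup_Inf_eq_min:
  assumes k: "0 \<le> k" and lb: "\<And>y. b \<le> f y"
  shows "setup_Inf k f x = min (f x) (k + tail_Inf f x)"
proof (rule antisym)
  have dlt: "0 \<le> dlt z" "dlt z \<le> 1" for z by (auto simp: dlt_def)
  have bdd: "bdd_below ((\<lambda>y. k * dlt (y - x) + f y) ` {x..})"
  proof (rule bdd_belowI2[where m = b])
    fix y
    show "b \<le> k * dlt (y - x) + f y"
      using lb[of y] mult_nonneg_nonneg[OF k dlt(1)[of "y - x"]] by linarith
  qed
  have le: "setup_Inf k f x \<le> k * dlt (y - x) + f y" if "x \<le> y" for y
    unfolding setup_Inf_def by (rule cInf_lower) (use bdd that in auto)
  have "setup_Inf k f x - k \<le> tail_Inf f x"
  proof (rule tail_Inf_greatest)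
    fix y assume "x \<le> y"
    have "k * dlt (y - x) \<le> k" using dlt(2) k by (rule mult_left_le)
    then show "setup_Inf k f x - k \<le> f y"
      using le[OF \<open>x \<le> y\<close>] by linarith
  qed
  moreover have "setup_Inf k f x \<le> f x" using le[of x] by (simp add: dlt_def)
  ultimately show "setup_Inf k f x \<le> min (f x) (k + tail_Inf f x)"
    by simp
  show "min (f x) (k + tail_Inf f x) \<le> setup_Inf k f x"
    unfolding setup_Inf_def
  proof (rule cInf_greatest)
    fix z assume "z \<in> (\<lambda>y. k * dlt (y - x) + f y) ` {x..}"
    then obtain y where "x \<le> y" and z: "z = k * dlt (y - x) + f y" by auto
    show "min (f x) (k + tail_Inf f x) \<le> z"
    proof (cases "y = x")
      case False
      then have "z = k + f y" using \<open>x \<le> y\<close> by (simp add: z dlt_def)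
      then show ?thesis using tail_Inf_le[of b f x y] lb \<open>x \<le> y\<close> by simp
    qed (simp add: z dlt_def)
  qed simp
qed

lemma setup_Inf_lower_bound:
  assumes k: "0 \<le> k" and lb: "\<And>y. b \<le> f y"
  shows "b \<le> setup_Inf k f x"
proof -
  have "b \<le> tail_Inf f x" by (rule tail_Inf_greatest) (rule lb)
  then show ?thesis using lb[of x] k unfolding setup_Inf_eq_min[of k b f, OF k lb] by simp
qed

lemma continuous_on_setup_Inf:
  assumes cont: "continuous_on UNIV f" and k: "0 \<le> k" and lb: "\<And>y. b \<le> f y"
  shows "continuous_on UNIV (setup_Inf k f)"
proof -
  have "setup_Inf k f = (\<lambda>x. min (f x) (k + tail_Inf f x))"
    using setup_Inf_eq_min[of k b f, OF k lb] by (intro ext)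
  then show ?thesis
    using continuous_on_tail_Inf[of f b, OF cont lb]
    by (simp add: continuous_on_min continuous_on_add cont)
qed

lemma mono_up_to_setup_Inf:
  assumes k: "0 \<le> k" and lb: "\<And>y. b \<le> f y"
  shows "mono_up_to k (setup_Inf k f)"
  unfolding mono_up_to_def
proof (intro allI impI)
  fix x x' :: real assume "x \<le> x'"
  then have "tail_Inf f x \<le> tail_Inf f x'" "tail_Inf f x' \<le> f x'"
    using tail_Inf_mono[of b f x x'] tail_Inf_le[of b f x' x'] lb by auto
  then show "setup_Inf k f x \<le> k + setup_Inf k f x'"
    using k unfolding setup_Inf_eq_min[of k b f, OF k lb] by simp
qed

lemma (in finite_measure) continuous_on_integral_shift:
  fixes V :: "real \<Rightarrow> real" and X :: "'a \<Rightarrow> real"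
  assumes cont: "continuous_on UNIV V" and lb: "\<And>x. b \<le> V x" and mono: "mono_up_to k V"
    and int: "\<And>y. integrable M (\<lambda>\<omega>. V (y - X \<omega>))"
  shows "continuous_on UNIV (\<lambda>y. \<integral>\<omega>. V (y - X \<omega>) \<partial>M)"
  unfolding continuous_on_eq_continuous_at[OF open_UNIV]
proof (intro ballI continuous_at_sequentiallyI)
  fix y0 and s :: "nat \<Rightarrow> real" assume s: "s \<longlonglongrightarrow> y0"
  obtain B where "\<And>n. \<bar>s n\<bar> \<le> B"
    using convergent_imp_Bseq[OF convergentI[OF s]] by (auto simp: Bseq_def)
  then have B: "s n \<le> B" for n by (simp add: abs_le_iff)
  \<comment> \<open>By \<open>mono_up_to k V\<close>, every \<open>V (s n - X \<omega>)\<close> lies between \<open>b\<close>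
    and \<open>k + V (B - X \<omega>)\<close>.\<close>
  define w where "w \<omega> = \<bar>b\<bar> + \<bar>k\<bar> + \<bar>V (B - X \<omega>)\<bar>" for \<omega>
  show "(\<lambda>n. \<integral>\<omega>. V (s n - X \<omega>) \<partial>M) \<longlonglongrightarrow> (\<integral>\<omega>. V (y0 - X \<omega>) \<partial>M)"
  proof (rule integral_dominated_convergence[where w = w])
    show "integrable M w"
      unfolding w_def by (intro Bochner_Integration.integrable_add integrable_const integrable_abs int)
    show "AE \<omega> in M. (\<lambda>n. V (s n - X \<omega>)) \<longlonglongrightarrow> V (y0 - X \<omega>)"
    proof (rule AE_I2)
      fix \<omega>
      have "isCont V (y0 - X \<omega>)" using cont by (simp add: continuous_on_eq_continuous_at)
      then show "(\<lambda>n. V (s n - X \<omega>)) \<longlonglongrightarrow> V (y0 - X \<omega>)"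
        by (rule isCont_tendsto_compose) (intro tendsto_intros s)
    qed
    show "AE \<omega> in M. norm (V (s n - X \<omega>)) \<le> w \<omega>" for n
    proof (rule AE_I2)
      fix \<omega>
      have "V (s n - X \<omega>) \<le> k + V (B - X \<omega>)"
        using mono B[of n] by (auto simp: mono_up_to_def)
      then show "norm (V (s n - X \<omega>)) \<le> w \<omega>"
        using lb[of "s n - X \<omega>"] by (auto simp: w_def)
    qed
  qed (use int in auto)
qed

lemma grid_bracket_unique:
  fixes \<theta> x :: real
  assumes "\<theta> > 0"
  shows "\<exists>!n::int. of_int n * \<theta> < x \<and> x \<le> of_int (n + 1) * \<theta>"
proof -
  have iff: "(of_int n * \<theta> < x \<and> x \<le> of_int (n + 1) * \<theta>) \<longleftrightarrow> \<lceil>x / \<theta>\<rceil> = n + 1" for n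
    using assms by (simp add: ceiling_eq_iff pos_less_divide_eq pos_divide_le_eq)
  show ?thesis
    unfolding iff by (rule ex1I[of _ "\<lceil>x / \<theta>\<rceil> - 1"]) auto
qed

lemma grid_LeastI:
  fixes \<theta> a :: real
  assumes "\<theta> > 0" and on_grid: "\<And>z. P z \<Longrightarrow> \<exists>m::int. z = of_int m * \<theta>"
    and below: "\<And>z. P z \<Longrightarrow> a \<le> z" and "P z1"
  shows "P (LEAST z. P z)"
proof -
  define A where "A = {m::int. P (of_int m * \<theta>)}"
  obtain m1 where "m1 \<in> A" using on_grid[OF \<open>P z1\<close>] \<open>P z1\<close> by (auto simp: A_def)
  have low: "\<lfloor>a / \<theta>\<rfloor> \<le> m" if "m \<in> A" for m
  proof -
    have "a / \<theta> \<le> of_int m"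
      using below[of "of_int m * \<theta>"] that \<open>\<theta> > 0\<close> by (simp add: A_def pos_divide_le_eq)
    then show ?thesis by linarith
  qed
  \<comment> \<open>The points of \<open>A\<close> below \<open>m1\<close> form a finite set, whose minimum is the least
    point of \<open>A\<close>.\<close>
  define B where "B = A \<inter> {\<lfloor>a / \<theta>\<rfloor>..m1}"
  have "finite B" "m1 \<in> B" using \<open>m1 \<in> A\<close> low by (auto simp: B_def)
  then have "Min B \<in> B" by (intro Min_in) auto
  then have "Min B \<in> A" by (simp add: B_def)
  have Min_least: "Min B \<le> m" if "m \<in> A" for m
  proof (cases "m \<le> m1")
    case True
    then have "m \<in> B" using that low[OF that] by (simp add: B_def)
    then show ?thesis using \<open>finite B\<close> by simp
  next
    case False
    then show ?thesis using Min_le[OF \<open>finite B\<close> \<open>m1 \<in> B\<close>] by simp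
  qed
  show ?thesis
  proof (rule LeastI2_order[of _ "of_int (Min B) * \<theta>"])
    show "P (of_int (Min B) * \<theta>)" using \<open>Min B \<in> A\<close> by (simp add: A_def)
    fix z assume "P z"
    then obtain m where z: "z = of_int m * \<theta>" using on_grid by blast
    then have "Min B \<le> m" using Min_least \<open>P z\<close> by (simp add: A_def)
    then show "of_int (Min B) * \<theta> \<le> z" unfolding z using \<open>\<theta> > 0\<close> by simp
  qed
qed

locale inventory_model = prob_space M
  for M :: "'a measure" +
  fixes \<alpha> :: real and c K :: "nat \<Rightarrow> real" and G :: "nat \<Rightarrow> real \<Rightarrow> real"
    and D :: "nat \<Rightarrow> 'a \<Rightarrow> real" and T :: nat
  assumes alpha_nonneg: "0 \<le> \<alpha>"
    and K_nonneg: "\<And>t. t < T \<Longrightarrow> K t \<ge> 0"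
    and K_dec: "\<And>t. t + 2 \<le> T \<Longrightarrow> K t \<ge> \<alpha> * K (Suc t)"
    and V_int: "\<And>t y. t < T \<Longrightarrow>
                  integrable M (\<lambda>\<omega>. Vstar \<alpha> c K G M D T (Suc t) (y - D t \<omega>))"
    and C_convex: "\<And>t. t < T \<Longrightarrow> convex_on UNIV (Cfun \<alpha> c G M D t)"
    and C_top: "\<And>t. t < T \<Longrightarrow> filterlim (Cfun \<alpha> c G M D t) at_top at_top"
    and C_bot: "\<And>t. t < T \<Longrightarrow> filterlim (Cfun \<alpha> c G M D t) at_top at_bot"
begin

abbreviation "C \<equiv> Cfun \<alpha> c G M D"
abbreviation "H \<equiv> Hstar \<alpha> c K G M D T"
abbreviation "V \<equiv> Vstar \<alpha> c K G M D T"

lemma V_terminal: "V T = (\<lambda>x. 0)"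
  by (simp add: Vstar_def)

lemma V_step:
  assumes "t < T"
  shows "V t = setup_Inf (K t) (H t)"
proof -
  have "T - t = Suc (T - Suc t)" "T - Suc (T - Suc t) = t" using assms by simp_all
  then show ?thesis
    unfolding Vstar_def Hstar_def setup_Inf_def by (simp add: add.assoc)
qed

lemma C_continuous: "t < T \<Longrightarrow> continuous_on UNIV (C t)"
  by (rule convex_on_continuous[OF open_UNIV C_convex])

lemma Cmin_minimizes: "t < T \<Longrightarrow> C t (Cmin \<alpha> c G M D t) \<le> C t y"
  unfolding Cmin_def by (rule continuous_coercive_Least_minimizer[OF C_continuous C_top C_bot])

lemma C_mono_beyond_Cmin:
  assumes "t < T" and "Cmin \<alpha> c G M D t \<le> u" and "u \<le> s"
  shows "C t u \<le> C t s"
proof -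
  have "C t u \<le> max (C t (Cmin \<alpha> c G M D t)) (C t s)"
    using assms by (intro convex_on_le_max convex_on_subset[OF C_convex]) auto
  then show ?thesis using Cmin_minimizes[OF \<open>t < T\<close>, of s] by simp
qed

lemma H_regular:
  assumes t: "t < T" and cont: "continuous_on UNIV (V (Suc t))"
    and lb: "\<And>x. b \<le> V (Suc t) x" and mono: "mono_up_to k (V (Suc t))"
  shows "continuous_on UNIV (H t)"
    and "C t y + \<alpha> * b \<le> H t y"
    and "z \<le> s \<Longrightarrow> H t z \<le> H t s + (C t z - C t s) + \<alpha> * k"
proof -
  define E where "E y = (\<integral>\<omega>. V (Suc t) (y - D t \<omega>) \<partial>M)" for y
  have H_eq: "H t = (\<lambda>y. C t y + \<alpha> * E y)" by (simp add: fun_eq_iff Hstar_def E_def)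
  have int: "integrable M (\<lambda>\<omega>. V (Suc t) (y - D t \<omega>))" for y by (rule V_int[OF t])
  have "continuous_on UNIV E"
    unfolding E_def by (rule continuous_on_integral_shift[OF cont lb mono int])
  then show "continuous_on UNIV (H t)"
    unfolding H_eq by (intro continuous_on_add continuous_on_mult_left C_continuous[OF t])
  have "b \<le> E y" unfolding E_def by (rule integral_ge_const[OF int]) (simp add: lb)
  then show "C t y + \<alpha> * b \<le> H t y"
    unfolding H_eq using alpha_nonneg by (simp add: mult_left_mono)
  assume "z \<le> s"
  have "E z \<le> (\<integral>\<omega>. k + V (Suc t) (s - D t \<omega>) \<partial>M)"
    unfolding E_def using mono \<open>z \<le> s\<close>
    by (intro integral_mono int Bochner_Integration.integrable_add integrable_const)
      (auto simp: mono_up_to_def)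
  also have "\<dots> = k + E s" using int by (simp add: E_def prob_space)
  finally show "H t z \<le> H t s + (C t z - C t s) + \<alpha> * k"
    unfolding H_eq using alpha_nonneg mult_left_mono[of "E z" "k + E s" \<alpha>]
    by (simp add: algebra_simps)
qed

lemma V_regular:
  assumes "t \<le> T"
  shows "continuous_on UNIV (V t) \<and> (\<exists>b. \<forall>x. b \<le> V t x)
    \<and> mono_up_to (if t < T then K t else 0) (V t)"
  using assms
proof (induction "T - t" arbitrary: t)
  case 0
  then have "t = T" by simp
  then show ?case using V_terminal by (auto simp: mono_up_to_def intro!: exI[of _ 0])
next
  case (Suc n)
  then have t: "t < T" and "n = T - Suc t" by auto
  with Suc.hyps obtain b where cont: "continuous_on UNIV (V (Suc t))"
    and lb: "\<And>x. b \<le> V (Suc t) x"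
    and mono: "mono_up_to (if Suc t < T then K (Suc t) else 0) (V (Suc t))"
    by (metis Suc_leI)
  note H = H_regular[OF t cont lb mono]
  define b' where "b' = C t (Cmin \<alpha> c G M D t) + \<alpha> * b"
  have lb': "b' \<le> H t y" for y
    using H(2)[of y] Cmin_minimizes[OF t, of y] by (simp add: b'_def)
  have K: "0 \<le> K t" by (rule K_nonneg[OF t])
  show ?case
    unfolding V_step[OF t] using t
    continuous_on_setup_Inf[of "H t" "K t" b', OF H(1) K lb']
    setup_Inf_lower_bound[of "K t" b' "H t", OF K lb']
    mono_up_to_setup_Inf[of "K t" b' "H t", OF K lb']
    by auto
qed

lemma V_next_regular:
  assumes "t < T"
  obtains b k where "continuous_on UNIV (V (Suc t))" "\<And>x. b \<le> V (Suc t) x"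
    "mono_up_to k (V (Suc t))" "\<alpha> * k \<le> K t"
proof -
  have "\<alpha> * (if Suc t < T then K (Suc t) else 0) \<le> K t"
    using K_dec[of t] K_nonneg[OF assms] by auto
  then show thesis using V_regular[of "Suc t"] assms that by auto
qed

lemma Sstar_minimizes:
  assumes t: "t < T"
  shows "H t (Sstar \<alpha> c K G M D T t) \<le> H t y"
proof -
  obtain b k where cont: "continuous_on UNIV (V (Suc t))" and lb: "\<And>x. b \<le> V (Suc t) x"
    and mono: "mono_up_to k (V (Suc t))"
    using V_next_regular[OF t] by blast
  note H = H_regular[OF t cont lb mono]
  have coercive: "filterlim (H t) at_top F"
    if "filterlim (C t) at_top F" for F :: "real filter"
  proof (rule filterlim_at_top_mono)
    show "filterlim (\<lambda>z. \<alpha> * b + C t z) at_top F"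
      by (rule filterlim_tendsto_add_at_top[OF tendsto_const that])
    show "\<forall>\<^sub>F z in F. \<alpha> * b + C t z \<le> H t z"
      using H(2) by (simp add: add.commute)
  qed
  show ?thesis
    unfolding Sstar_def
    by (rule continuous_coercive_Least_minimizer[OF H(1) coercive coercive])
      (use C_top[OF t] C_bot[OF t] in auto)
qed

lemma H_increment_le:
  assumes "t < T" and "z \<le> s"
  shows "H t z \<le> H t s + (C t z - C t s) + K t"
proof -
  obtain b k where cont: "continuous_on UNIV (V (Suc t))" and lb: "\<And>x. b \<le> V (Suc t) x"
    and mono: "mono_up_to k (V (Suc t))" and "\<alpha> * k \<le> K t"
    using V_next_regular[OF \<open>t < T\<close>] by blast
  then show ?thesis using H_regular(3)[OF \<open>t < T\<close> cont lb mono \<open>z \<le> s\<close>] by linarith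
qed

lemma SU_properties:
  assumes "\<theta> > 0" and t: "t < T"
  defines "z0 \<equiv> of_int (n0 \<theta> \<alpha> c G M D t) * \<theta>"
  shows "z0 < Cmin \<alpha> c G M D t" and "Cmin \<alpha> c G M D t \<le> SU \<theta> \<alpha> c K G M D t"
    and "C t z0 + K t < C t (SU \<theta> \<alpha> c K G M D t)"
proof -
  let ?cm = "Cmin \<alpha> c G M D t"
  show "z0 < ?cm"
    using theI'[OF grid_bracket_unique[OF \<open>\<theta> > 0\<close>, of ?cm]] by (simp add: z0_def n0_def)
  define P where "P = (\<lambda>z. (\<exists>m::int. z = of_int m * \<theta>) \<and> ?cm \<le> z \<and> C t z0 + K t < C t z)"
  have SU_eq: "SU \<theta> \<alpha> c K G M D t = Least P"
    unfolding SU_def P_def z0_def ..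
  have "eventually (\<lambda>z. C t z0 + K t + 1 \<le> C t z) at_top"
    using C_top[OF t] by (simp add: filterlim_at_top)
  then obtain R where R: "\<And>z. R \<le> z \<Longrightarrow> C t z0 + K t + 1 \<le> C t z"
    by (auto simp: eventually_at_top_linorder)
  define z1 where "z1 = of_int \<lceil>max R ?cm / \<theta>\<rceil> * \<theta>"
  have "max R ?cm / \<theta> \<le> of_int \<lceil>max R ?cm / \<theta>\<rceil>" by (rule le_of_int_ceiling)
  then have "max R ?cm \<le> z1"
    unfolding z1_def using pos_divide_le_eq[OF \<open>\<theta> > 0\<close>] by blast
  then have "P z1" using R[of z1] unfolding P_def z1_def by auto
  have "P (Least P)"
  proof (rule grid_LeastI[where P = P, OF \<open>\<theta> > 0\<close> _ _ \<open>P z1\<close>])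
    show "\<exists>m::int. z = of_int m * \<theta>" "?cm \<le> z" if "P z" for z
      using that unfolding P_def by simp_all
  qed
  then show "?cm \<le> SU \<theta> \<alpha> c K G M D t" "C t z0 + K t < C t (SU \<theta> \<alpha> c K G M D t)"
    unfolding SU_eq P_def by simp_all
qed

end

theorem lemma4p7:
  fixes T :: nat and \<alpha> \<theta> :: real and c K :: "nat \<Rightarrow> real"
    and G :: "nat \<Rightarrow> real \<Rightarrow> real" and M :: "'a measure" and D :: "nat \<Rightarrow> 'a \<Rightarrow> real"
  assumes T2: "T \<ge> 2"
    and alpha: "0 < \<alpha>" "\<alpha> \<le> 1"
    and theta: "\<theta> > 0"
    and K_nonneg: "\<And>t. t < T \<Longrightarrow> K t \<ge> 0"
    and K_dec: "\<And>t. t + 2 \<le> T \<Longrightarrow> K t \<ge> \<alpha> * K (Suc t)"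
    and prob: "prob_space M"
    and D_rv: "\<And>t. t < T \<Longrightarrow> D t \<in> borel_measurable M"
    and D_indep: "prob_space.indep_vars M (\<lambda>_. borel) D {..<T}"
    and D_nonneg: "\<And>t. t < T \<Longrightarrow> AE \<omega> in M. D t \<omega> \<ge> 0"
    and D_mean: "\<And>t. t < T \<Longrightarrow> integrable M (D t)"
    and V_int: "\<And>t y. t < T \<Longrightarrow>
                  integrable M (\<lambda>\<omega>. Vstar \<alpha> c K G M D T (Suc t) (y - D t \<omega>))"
    and C_convex: "\<And>t. t < T \<Longrightarrow> convex_on UNIV (Cfun \<alpha> c G M D t)"
    and C_top: "\<And>t. t < T \<Longrightarrow> filterlim (Cfun \<alpha> c G M D t) at_top at_top"
    and C_bot: "\<And>t. t < T \<Longrightarrow> filterlim (Cfun \<alpha> c G M D t) at_top at_bot"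
  shows "\<forall>t < T. Sstar \<alpha> c K G M D T t \<le> SU \<theta> \<alpha> c K G M D t"
proof -
  \<comment> \<open>The demands need not be independent, nonnegative or of finite mean, nor \<open>T \<ge> 2\<close>.\<close>
  interpret inventory_model M \<alpha> c K G D T
    by (intro inventory_model.intro inventory_model_axioms.intro prob)
      (use alpha K_nonneg K_dec V_int C_convex C_top C_bot in auto)
  show ?thesis
  proof (intro allI impI)
    fix t assume t: "t < T"
    let ?s = "Sstar \<alpha> c K G M D T t" and ?u = "SU \<theta> \<alpha> c K G M D t"
      and ?z0 = "of_int (n0 \<theta> \<alpha> c G M D t) * \<theta>"
    note SU = SU_properties[OF theta t]
    show "?s \<le> ?u"
    proof (rule ccontr)
      assume "\<not> ?s \<le> ?u"
      then have "C t ?u \<le> C t ?s" and "?z0 \<le> ?s"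
        using C_mono_beyond_Cmin[OF t SU(2)] SU(1,2) by auto
      moreover have "H t ?s \<le> H t ?z0" by (rule Sstar_minimizes[OF t])
      moreover have "H t ?z0 \<le> H t ?s + (C t ?z0 - C t ?s) + K t"
        by (rule H_increment_le[OF t \<open>?z0 \<le> ?s\<close>])
      ultimately show False using SU(3) by linarith
    qed
  qed
qed

end
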